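(* Let $q$ be a prime power and $M\geq 2$ an integer. Let $g\in\mathbb{F}_q[x]$ be a monic irreducible polynomial with $g(0)\neq 0$ and $g\neq g^*$ (so that $f=gg^*$ is a type $2$ polynomial). Then every irreducible factor $h$ of $g(x^M)$ is of type $2$, i.e. satisfies $h\neq h^*$ (it is not self-reciprocal).
   Context: For a monic polynomial $f\in\mathbb{F}_q[x]$ of degree $r$ with $f(0)\neq0$, its dual is $f^*(x)=f(0)^{-1}x^rf(x^{-1})$, and $f$ is self-reciprocal if $f=f^*$. A type $2$ polynomial is one of the form $gg^*$ with $g$ irreducible and $g\neq g^*$. *)

theory Defs
  imports "HOL-Computational_Algebra.Computational_Algebra"
begin

definition dual_poly :: "'a::field poly \<Rightarrow> 'a poly" where
  "dual_poly f = smult (inverse (coeff f 0)) (reflect_poly f)"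

definition self_reciprocal :: "'a::field poly \<Rightarrow> bool" where
  "self_reciprocal f \<longleftrightarrow> f = dual_poly f"

end

theory Submission
  imports Defs
begin

text \<open>Reciprocation commutes with the substitution x \<mapsto> x^M, so a self-reciprocal h dividing
  g(x^M) also divides g^*(x^M). But g and g^* are coprime, being non-associated irreducibles, and
  substituting x^M into a Bezout identity for them shows that g(x^M) and g^*(x^M) are coprime,
  so h would be a unit.\<close>

lemma coeff_pcompose_monom:
  fixes p :: "'a::comm_semiring_1 poly"
  assumes "0 < M"
  shows "coeff (pcompose p (monom 1 M)) n = (if M dvd n then coeff p (n div M) else 0)"
proof (induction p arbitrary: n rule: pCons_induct)
  case 0
  then show ?case by simp
next
  case (pCons a p)
  show ?case
  proof (cases "n < M")
    case True
    then have "M dvd n \<longleftrightarrow> n = 0" using assms by (auto dest: dvd_imp_le)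
    with True show ?thesis
      by (auto simp: pcompose_pCons coeff_monom_mult coeff_pCons split: nat.split)
  next
    case False
    then have "coeff (pcompose (pCons a p) (monom 1 M)) n = coeff (pcompose p (monom 1 M)) (n - M)"
      using assms by (simp add: pcompose_pCons coeff_monom_mult coeff_pCons split: nat.split)
    with False assms show ?thesis
      by (simp add: pCons.IH dvd_minus_self le_div_geq coeff_pCons)
  qed
qed

lemma reflect_poly_pcompose_monom:
  fixes p :: "'a::idom poly"
  assumes "0 < M"
  shows "reflect_poly (pcompose p (monom 1 M)) = pcompose (reflect_poly p) (monom 1 M)"
proof (rule poly_eqI)
  fix n
  have degree: "degree (pcompose p (monom 1 M)) = degree p * M"
    by (simp add: degree_pcompose degree_monom_eq)
  show "coeff (reflect_poly (pcompose p (monom 1 M))) n = coeff (pcompose (reflect_poly p) (monom 1 M)) n"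
  proof (cases "M dvd n")
    case True
    then obtain k where n: "n = k * M" by (metis dvd_def mult.commute)
    have "degree p * M - k * M = (degree p - k) * M" by (simp add: diff_mult_distrib)
    with assms show ?thesis
      by (simp add: n degree coeff_reflect_poly coeff_pcompose_monom)
  next
    case False
    have "\<not> M dvd degree p * M - n" if "n \<le> degree p * M"
      using False that by (metis dvd_diff_nat diff_diff_cancel dvd_triv_right)
    with False assms show ?thesis
      by (auto simp: degree coeff_reflect_poly coeff_pcompose_monom)
  qed
qed

lemma irreducible_imp_coprime:
  fixes p q :: "'a::algebraic_semidom"
  assumes "irreducible p" "\<not> p dvd q"
  shows "coprime p q"
proof (rule coprimeI)
  fix d assume "d dvd p" "d dvd q"
  from \<open>d dvd p\<close> obtain e where "p = d * e" by (rule dvdE)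
  with assms(1) have "is_unit d \<or> is_unit e" by (rule irreducibleD)
  moreover have "\<not> is_unit e"
    using \<open>p = d * e\<close> \<open>d dvd q\<close> assms(2) by (auto simp: mult_unit_dvd_iff)
  ultimately show "is_unit d" by blast
qed

text \<open>Over an arbitrary field the polynomial ring is not an instance of the gcd classes, so
  \<^const>\<open>bezout_coefficients\<close> is unavailable; instead take a nonzero element of least degree
  in the ideal generated by p and q.\<close>
lemma coprime_imp_bezout_poly:
  fixes p q :: "'a::field poly"
  assumes "coprime p q"
  obtains a b where "a * p + b * q = 1"
proof -
  define I where "I = {a * p + b * q | a b. True}"
  have "p = 1 * p + 0 * q" "q = 0 * p + 1 * q"
    by simp_all
  then have p: "p \<in> I" and q: "q \<in> I"
    unfolding I_def by blast+
  have diff_mult: "x - c * y \<in> I" if x: "x \<in> I" and y: "y \<in> I" for x y c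
  proof -
    obtain a b a' b' where "x = a * p + b * q" "y = a' * p + b' * q"
      using x y unfolding I_def by blast
    then have "x - c * y = (a - c * a') * p + (b - c * b') * q"
      by (simp add: algebra_simps)
    then show ?thesis
      unfolding I_def by blast
  qed
  have "p \<noteq> 0 \<or> q \<noteq> 0"
    using assms by auto
  then obtain m where m: "m \<in> I" "m \<noteq> 0"
    and minimal: "\<And>x. x \<in> I \<Longrightarrow> x \<noteq> 0 \<Longrightarrow> degree m \<le> degree x"
    using p q ex_has_least_nat[of "\<lambda>x. x \<in> I \<and> x \<noteq> 0" _ degree] by metis
  have "m dvd x" if "x \<in> I" for x
  proof -
    have "x mod m \<in> I"
      using diff_mult[OF that m(1), of "x div m"] by (simp add: minus_div_mult_eq_mod)
    then have "x mod m = 0"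
      using minimal degree_mod_less[OF m(2), of x] by fastforce
    then show ?thesis by (simp add: mod_eq_0_iff_dvd)
  qed
  then have "is_unit m"
    using p q assms by (blast intro: coprime_common_divisor)
  then obtain w where "m * w = 1"
    by (metis dvdE)
  moreover obtain a b where "m = a * p + b * q"
    using m(1) unfolding I_def by blast
  ultimately have "(w * a) * p + (w * b) * q = 1"
    by (simp add: algebra_simps)
  then show ?thesis by (rule that)
qed

lemma coprime_pcompose:
  fixes p q :: "'a::field poly"
  assumes "coprime p q"
  shows "coprime (pcompose p r) (pcompose q r)"
proof -
  obtain a b where "a * p + b * q = 1"
    using assms by (rule coprime_imp_bezout_poly)
  then have "pcompose a r * pcompose p r + pcompose b r * pcompose q r = 1"
    by (metis pcompose_add pcompose_mult pcompose_1)
  then show ?thesis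
    by (metis coprimeI dvd_add dvd_mult)
qed

lemma self_reciprocal_imp_dvd_reflect_poly:
  fixes f :: "'a::field poly"
  assumes "self_reciprocal f"
  shows "f dvd reflect_poly f"
proof (cases "coeff f 0 = 0")
  case True
  with assms show ?thesis by (simp add: self_reciprocal_def dual_poly_def)
next
  case False
  from assms have "reflect_poly f = smult (coeff f 0) f"
    unfolding self_reciprocal_def dual_poly_def using False by (metis smult_smult right_inverse smult_1_left)
  then show ?thesis by (simp add: dvd_smult)
qed

lemma self_reciprocal_if_dvd_reflect_poly:
  fixes f :: "'a::field poly"
  assumes "lead_coeff f = 1" "coeff f 0 \<noteq> 0" "f dvd reflect_poly f"
  shows "self_reciprocal f"
proof -
  obtain k where k: "reflect_poly f = f * k" using assms(3) by (rule dvdE)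
  have "f \<noteq> 0" "k \<noteq> 0" using assms(1) k by auto
  moreover have "degree (f * k) = degree f"
    using k[symmetric] assms(2) by simp
  ultimately have "degree k = 0"
    by (simp add: degree_mult_eq)
  then have "k = [:lead_coeff k:]" by (metis degree_0_id)
  moreover have "lead_coeff k = coeff f 0"
  proof -
    have "lead_coeff (reflect_poly f) = coeff f 0"
      using assms(2) by (simp add: coeff_reflect_poly)
    then show ?thesis using k assms(1) by (simp add: lead_coeff_mult)
  qed
  ultimately have "reflect_poly f = smult (coeff f 0) f"
    using k by (metis mult.commute mult_smult_left mult_1 smult_one)
  then show ?thesis
    using assms(2) by (simp add: self_reciprocal_def dual_poly_def)
qed

lemma reflect_poly_dvd_reflect_poly:
  fixes p q :: "'a::{comm_semiring_1,semiring_no_zero_divisors} poly"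
  assumes "p dvd q"
  shows "reflect_poly p dvd reflect_poly q"
proof -
  obtain k where "q = p * k"
    using assms by (rule dvdE)
  then show ?thesis
    by (simp add: reflect_poly_mult)
qed

theorem lemma4p18:
  fixes g :: "'a::{finite,field} poly" and M :: nat
  assumes "M \<ge> 2"
    and "lead_coeff g = 1" and "irreducible g"
    and "coeff g 0 \<noteq> 0"
    and "\<not> self_reciprocal g"
  shows "\<forall>h. lead_coeff h = 1 \<and> irreducible h \<and> h dvd pcompose g (monom 1 M)
           \<longrightarrow> \<not> self_reciprocal h"
proof (intro allI impI notI)
  fix h :: "'a poly"
  assume h: "lead_coeff h = 1 \<and> irreducible h \<and> h dvd pcompose g (monom 1 M)"
    and "self_reciprocal h"
  let ?X = "monom 1 M :: 'a poly"
  have "\<not> g dvd reflect_poly g"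
    using assms(2,4,5) self_reciprocal_if_dvd_reflect_poly by blast
  with assms(3) have "coprime g (reflect_poly g)"
    by (rule irreducible_imp_coprime)
  then have "coprime (pcompose g ?X) (pcompose (reflect_poly g) ?X)"
    by (rule coprime_pcompose)
  moreover have "h dvd pcompose g ?X"
    using h by blast
  moreover have "h dvd pcompose (reflect_poly g) ?X"
  proof -
    have "h dvd reflect_poly h"
      using \<open>self_reciprocal h\<close> by (rule self_reciprocal_imp_dvd_reflect_poly)
    also have "\<dots> dvd reflect_poly (pcompose g ?X)"
      using h by (blast intro: reflect_poly_dvd_reflect_poly)
    also have "\<dots> = pcompose (reflect_poly g) ?X"
      using assms(1) by (simp add: reflect_poly_pcompose_monom)
    finally show ?thesis .
  qed
  ultimately have "is_unit h"
    by (rule coprime_common_divisor)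
  moreover have "irreducible h"
    using h by blast
  ultimately show False
    by (simp add: irreducible_not_unit)
qed

end
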